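(* Consider the multicast coalitional game with player set $\mathcal{N}=\{1,\ldots,N\}$, $N\ge 2$, and value function $$v(S)=\sum_{i\in S}U_i-\sum_{i\in S}\frac{\alpha_i}{R_S}-\frac{\beta+\gamma}{R_S},\qquad R_S=\min_{i\in S}R_i,$$ for nonempty $S\subseteq\mathcal{N}$. Let $R_{min}=\min_iR_i$, $R_{max}=\max_iR_i$, $\alpha_{min}=\min_i\alpha_i$, $\alpha_{max}=\max_i\alpha_i$. If $$\frac{R_{max}}{R_{min}}\le\left(\frac{N}{N-1}\right)\left(\frac{\alpha_{min}(N-1)+\beta+\gamma}{\alpha_{max}N+\beta+\gamma}\right),$$ then the core is non-empty.
   Context: A transmitter multicasts a file of size $X>0$ bits to users $\mathcal{N}=\{1,\dots,N\}$. User $i$ has valuation $U_i\in\mathbb{R}$, downloads at rate $R_i>0$, and consumes receive power $P_{Rx,i}>0$; the transmitter transmits at power $P_{Tx}>0$. Costs per unit energy are $a>0$ at users and $b>0$ at the transmitter; bandwidth cost per second is $w>0$. Set $\alpha_i=aP_{Rx,i}X$, $\beta=bP_{Tx}X$, $\gamma=wX$. The core is the set of payoff vectors $(x_1,\dots,x_N)\in\mathbb{R}^N$ with $\sum_{i\in\mathcal{N}}x_i=v(\mathcal{N})$ and $\sum_{i\in S}x_i\ge v(S)$ for every nonempty $S\subseteq\mathcal{N}$. *)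

theory Defs
  imports Complex_Main
begin

definition rate_coalition :: "(nat \<Rightarrow> real) \<Rightarrow> nat set \<Rightarrow> real" where
  "rate_coalition R S = Min (R ` S)"

definition mc_value :: "(nat \<Rightarrow> real) \<Rightarrow> (nat \<Rightarrow> real) \<Rightarrow> (nat \<Rightarrow> real) \<Rightarrow> real \<Rightarrow> real \<Rightarrow> nat set \<Rightarrow> real" where
  "mc_value U R alpha beta gamma S =
     (\<Sum>i\<in>S. U i) - (\<Sum>i\<in>S. alpha i / rate_coalition R S) - (beta + gamma) / rate_coalition R S"

definition core :: "nat set \<Rightarrow> (nat set \<Rightarrow> real) \<Rightarrow> (nat \<Rightarrow> real) set" where
  "core Pl v = {x. (\<Sum>i\<in>Pl. x i) = v Pl \<and>
                   (\<forall>S. S \<subseteq> Pl \<and> S \<noteq> {} \<longrightarrow> (\<Sum>i\<in>S. x i) \<ge> v S)}"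

end

theory Submission
  imports Defs
begin

text \<open>Let every user pay its own receive cost at the slowest rate \<open>R\<^sub>m\<^sub>i\<^sub>n\<close> of the grand
  coalition, plus an equal share \<open>(\<beta> + \<gamma>) / N\<close> of the transmitter and bandwidth cost at that
  rate. This allocation is efficient, and a coalition \<open>S\<close> of \<open>s < N\<close> users is charged
  \<open>(A + s(\<beta> + \<gamma>)/N) / R\<^sub>m\<^sub>i\<^sub>n\<close>, where \<open>A = \<Sum>\<^sub>i\<^sub>\<in>\<^sub>S \<alpha>\<^sub>i\<close>, instead of \<open>(A + \<beta> + \<gamma>) / R\<^sub>S\<close> on its
  own. The first charge is at most the second as soon as
  \<open>R\<^sub>S / R\<^sub>m\<^sub>i\<^sub>n \<le> N (s \<alpha>\<^sub>m\<^sub>a\<^sub>x + \<beta> + \<gamma>) / (s (N \<alpha>\<^sub>m\<^sub>a\<^sub>x + \<beta> + \<gamma>))\<close>; the right-hand side decreases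
  in \<open>s\<close>, and at \<open>s = N - 1\<close> the hypothesis bounds \<open>R\<^sub>m\<^sub>a\<^sub>x / R\<^sub>m\<^sub>i\<^sub>n\<close> by it.\<close>

definition mc_allocation :: "(nat \<Rightarrow> real) \<Rightarrow> (nat \<Rightarrow> real) \<Rightarrow> (nat \<Rightarrow> real) \<Rightarrow> real \<Rightarrow> nat set \<Rightarrow> nat \<Rightarrow> real" where
  "mc_allocation U R alpha c P i =
     U i - alpha i / rate_coalition R P - c / (real (card P) * rate_coalition R P)"

lemma sum_mc_allocation:
  assumes "finite S"
  shows "(\<Sum>i\<in>S. mc_allocation U R alpha c P i) =
    (\<Sum>i\<in>S. U i) - ((\<Sum>i\<in>S. alpha i) + real (card S) * c / real (card P)) / rate_coalition R P"
  unfolding mc_allocation_def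
  by (simp add: sum_subtractf sum_divide_distrib[symmetric] add_divide_distrib)

lemma mc_value_eq:
  "mc_value U R alpha beta gamma S =
    (\<Sum>i\<in>S. U i) - ((\<Sum>i\<in>S. alpha i) + (beta + gamma)) / rate_coalition R S"
  unfolding mc_value_def by (simp add: sum_divide_distrib[symmetric] add_divide_distrib)

lemma rate_condition_for_smaller_size:
  fixes n s c Rmin Rmax amin amax :: real
  assumes s: "1 \<le> s" "s \<le> n - 1"
    and Rmin: "0 < Rmin" and c: "0 < c" and amin: "0 \<le> amin" "amin \<le> amax"
    and cond: "Rmax / Rmin \<le> (n / (n - 1)) * ((amin * (n - 1) + c) / (amax * n + c))"
  shows "Rmax * (s * (n * amax + c)) \<le> Rmin * (n * (s * amax + c))"
proof -
  have n1: "n - 1 > 0" using s by linarith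
  have den: "amax * n + c > 0" using s amin c by (simp add: add_nonneg_pos)
  have "Rmax / Rmin \<le> (n * ((n - 1) * amin + c)) / ((n - 1) * (n * amax + c))"
    using cond by (simp add: ac_simps)
  then have "Rmax * ((n - 1) * (n * amax + c)) \<le> n * ((n - 1) * amin + c) * Rmin"
    using Rmin n1 den by (simp add: pos_divide_le_eq pos_le_divide_eq ac_simps)
  also have "\<dots> \<le> n * ((n - 1) * amax + c) * Rmin"
    using Rmin n1 amin by (intro mult_right_mono mult_left_mono add_right_mono) auto
  finally have top: "Rmax * ((n - 1) * (n * amax + c)) \<le> n * ((n - 1) * amax + c) * Rmin" .
  have "s * ((n - 1) * amax + c) \<le> (n - 1) * (s * amax + c)"
    using mult_right_mono[OF s(2) less_imp_le[OF c]] by (simp add: algebra_simps)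
  then have "Rmin * (n * (s * ((n - 1) * amax + c))) \<le> Rmin * (n * ((n - 1) * (s * amax + c)))"
    using Rmin n1 by (intro mult_left_mono) auto
  with mult_left_mono[OF top, of s] s
  have "(n - 1) * (Rmax * (s * (n * amax + c))) \<le> (n - 1) * (Rmin * (n * (s * amax + c)))"
    by (simp add: algebra_simps)
  then show ?thesis using n1 by simp
qed

lemma proper_coalition_charge_le:
  fixes n s c A Rmin RS Rmax amax :: real
  assumes n: "0 < n" and s: "0 \<le> s" and c: "0 \<le> c" and A: "0 \<le> A" "A \<le> s * amax"
    and R: "0 < Rmin" "Rmin \<le> RS" "RS \<le> Rmax"
    and size_bound: "Rmax * (s * (n * amax + c)) \<le> Rmin * (n * (s * amax + c))"
  shows "(A + s * c / n) / Rmin \<le> (A + c) / RS"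
proof -
  have "(RS - Rmin) * (n * A) \<le> (RS - Rmin) * (n * (s * amax))"
    using R A n by (intro mult_left_mono) auto
  moreover have "0 \<le> s * (n * amax + c)"
    using A n s c by (simp add: distrib_left mult.left_commute[of s n])
  then have "RS * (s * (n * amax + c)) \<le> Rmax * (s * (n * amax + c))"
    using R by (intro mult_right_mono) auto
  ultimately have "RS * (n * A + s * c) \<le> Rmin * (n * A + n * c)"
    using size_bound by (simp add: algebra_simps)
  then show ?thesis
    using n R by (simp add: field_simps)
qed

lemma mc_allocation_in_core:
  fixes P :: "nat set" and U R alpha :: "nat \<Rightarrow> real" and beta gamma :: real
  defines "n \<equiv> real (card P)"
  assumes P: "finite P" "P \<noteq> {}"
    and R_pos: "\<forall>i\<in>P. R i > 0" and alpha_nonneg: "\<forall>i\<in>P. alpha i \<ge> 0"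
    and c_pos: "beta + gamma > 0"
    and cond: "Max (R ` P) / Min (R ` P) \<le> (n / (n - 1)) *
      ((Min (alpha ` P) * (n - 1) + beta + gamma) / (Max (alpha ` P) * n + beta + gamma))"
  shows "mc_allocation U R alpha (beta + gamma) P \<in> core P (mc_value U R alpha beta gamma)"
proof -
  let ?x = "mc_allocation U R alpha (beta + gamma) P" and ?v = "mc_value U R alpha beta gamma"
  define Rmin where "Rmin = Min (R ` P)"
  have rate_P: "rate_coalition R P = Rmin"
    unfolding rate_coalition_def Rmin_def ..
  have Rmin_pos: "Rmin > 0"
    using Min_in[of "R ` P"] P R_pos unfolding Rmin_def by auto
  have n_pos: "n > 0"
    using P unfolding n_def by (simp add: card_gt_0_iff)
  have efficient: "(\<Sum>i\<in>P. ?x i) = ?v P"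
    using n_pos P unfolding sum_mc_allocation[OF P(1)] mc_value_eq rate_P n_def[symmetric] by simp
  have stable: "?v S \<le> (\<Sum>i\<in>S. ?x i)" if S: "S \<subseteq> P" "S \<noteq> {}" for S
  proof (cases "S = P")
    case True
    then show ?thesis using efficient by simp
  next
    case False
    have S_fin: "finite S" using S P finite_subset by blast
    define s where "s = real (card S)"
    define A where "A = (\<Sum>i\<in>S. alpha i)"
    define RS where "RS = rate_coalition R S"
    define amin where "amin = Min (alpha ` P)"
    define amax where "amax = Max (alpha ` P)"
    have "card S < card P"
      using S False by (intro psubset_card_mono P(1)) blast
    moreover have "card S > 0"
      using S S_fin by (simp add: card_gt_0_iff)
    ultimately have s: "1 \<le> s" "s \<le> n - 1"
      unfolding s_def n_def by linarith+
    have amin: "0 \<le> amin" "amin \<le> amax"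
      using Min_in[of "alpha ` P"] Max_ge[of "alpha ` P"] P alpha_nonneg
      unfolding amin_def amax_def by auto
    have A: "0 \<le> A" "A \<le> s * amax"
      using S P alpha_nonneg unfolding A_def s_def amax_def
      by (auto intro!: sum_nonneg sum_bounded_above)
    have "RS \<in> R ` S"
      using S S_fin unfolding RS_def rate_coalition_def by (intro Min_in) auto
    then have RS: "Rmin \<le> RS" "RS \<le> Max (R ` P)"
      using S P unfolding Rmin_def by (auto intro: Min_le Max_ge)
    have "Max (R ` P) * (s * (n * amax + (beta + gamma))) \<le> Rmin * (n * (s * amax + (beta + gamma)))"
      using cond s Rmin_pos c_pos amin unfolding add.assoc Rmin_def amin_def amax_def
      by (intro rate_condition_for_smaller_size) auto
    then have "(A + s * (beta + gamma) / n) / Rmin \<le> (A + (beta + gamma)) / RS"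
      using n_pos s c_pos A Rmin_pos RS by (intro proper_coalition_charge_le) auto
    then show ?thesis
      unfolding sum_mc_allocation[OF S_fin] mc_value_eq rate_P
      by (simp add: A_def s_def n_def RS_def)
  qed
  show ?thesis
    unfolding core_def using efficient stable by blast
qed

theorem theorem4:
  fixes N :: nat and X a b w P_Tx :: real
    and U R P_Rx :: "nat \<Rightarrow> real"
  assumes N2: "N \<ge> 2"
    and X_pos: "X > 0" and a_pos: "a > 0" and b_pos: "b > 0" and w_pos: "w > 0"
    and PTx_pos: "P_Tx > 0"
    and R_pos: "\<forall>i\<in>{1..N}. R i > 0"
    and PRx_pos: "\<forall>i\<in>{1..N}. P_Rx i > 0"
    and cond: "let alpha = (\<lambda>i. a * P_Rx i * X); beta = b * P_Tx * X; gamma = w * X;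
                   Rmin = Min (R ` {1..N}); Rmax = Max (R ` {1..N});
                   amin = Min (alpha ` {1..N}); amax = Max (alpha ` {1..N})
               in Rmax / Rmin \<le> (real N / (real N - 1)) *
                  ((amin * (real N - 1) + beta + gamma) / (amax * real N + beta + gamma))"
  shows "core {1..N} (mc_value U R (\<lambda>i. a * P_Rx i * X) (b * P_Tx * X) (w * X)) \<noteq> {}"
proof -
  let ?alpha = "\<lambda>i. a * P_Rx i * X"
  have "mc_allocation U R ?alpha (b * P_Tx * X + w * X) {1..N}
    \<in> core {1..N} (mc_value U R ?alpha (b * P_Tx * X) (w * X))"
  proof (rule mc_allocation_in_core)
    show "finite {1..N}" "{1..N} \<noteq> {}"
      using N2 by auto
    show "\<forall>i\<in>{1..N}. 0 \<le> ?alpha i"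
      using PRx_pos a_pos X_pos by (simp add: less_imp_le)
    show "0 < b * P_Tx * X + w * X"
      using b_pos PTx_pos w_pos X_pos by (simp add: add_pos_pos)
    show "Max (R ` {1..N}) / Min (R ` {1..N}) \<le> (real (card {1..N}) / (real (card {1..N}) - 1)) *
      ((Min (?alpha ` {1..N}) * (real (card {1..N}) - 1) + b * P_Tx * X + w * X) /
       (Max (?alpha ` {1..N}) * real (card {1..N}) + b * P_Tx * X + w * X))"
      using cond by (simp add: Let_def)
  qed (rule R_pos)
  then show ?thesis by blast
qed

end
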